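(* For an integer $k\ge2$, let $\mathcal{X}_k$ be the set of all multisets $S\subset[0,1]^2$ of size exactly $k$ (counting multiplicity), equipped with $$\mathrm{EMD}(S,T)=\min_{\pi:S\to T}\frac1k\sum_{s\in S}\|s-\pi(s)\|_2,$$ the minimum over bijections $\pi$ between the multisets. Then $\mathrm{diam}(\mathcal{X}_k)\le\sqrt2$, and there is an absolute constant $C$ such that $\mathrm{ddim}(\mathcal{X}_k)\le Ck\log k$ for all $k\ge2$.
   Context: The doubling constant $\lambda$ of a metric space is the smallest number such that every ball can be covered by $\lambda$ balls of half the radius; the doubling dimension is $\mathrm{ddim}=\log_2\lambda$. *)

theory Defs
  imports "HOL-Analysis.Analysis" "HOL-Library.Multiset"
begin

text \<open>Points of the plane are pairs of reals; the product norm on real \<times> real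
  is the Euclidean norm, so dist is the Euclidean distance.\<close>

definition unit_square :: "(real \<times> real) set" where
  "unit_square = {0..1} \<times> {0..1}"

definition Xk :: "nat \<Rightarrow> (real \<times> real) multiset set" where
  "Xk k = {S. size S = k \<and> set_mset S \<subseteq> unit_square}"

text \<open>A bijection between multisets is the same as a pair of
  listings xs, ys of S, T matched position-wise.\<close>
definition EMD :: "nat \<Rightarrow> (real \<times> real) multiset \<Rightarrow> (real \<times> real) multiset \<Rightarrow> real" where
  "EMD k S T = Min {(1 / real k) * (\<Sum>i<k. dist (xs ! i) (ys ! i)) | xs ys.
                    mset xs = S \<and> mset ys = T}"

definition mball :: "('a \<Rightarrow> 'a \<Rightarrow> real) \<Rightarrow> 'a set \<Rightarrow> 'a \<Rightarrow> real \<Rightarrow> 'a set" where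
  "mball d X x r = {y \<in> X. d x y \<le> r}"

definition metric_diam :: "('a \<Rightarrow> 'a \<Rightarrow> real) \<Rightarrow> 'a set \<Rightarrow> ereal" where
  "metric_diam d X = (SUP x\<in>X. SUP y\<in>X. ereal (d x y))"

definition doubling_const :: "('a \<Rightarrow> 'a \<Rightarrow> real) \<Rightarrow> 'a set \<Rightarrow> enat" where
  "doubling_const d X = Inf {enat n | n. \<forall>x\<in>X. \<forall>r>0. \<exists>C. C \<subseteq> X \<and> finite C \<and> card C \<le> n \<and>
        mball d X x r \<subseteq> (\<Union>c\<in>C. mball d X c (r / 2))}"

definition doubling_dim :: "('a \<Rightarrow> 'a \<Rightarrow> real) \<Rightarrow> 'a set \<Rightarrow> ereal" where
  "doubling_dim d X = (case doubling_const d X of enat n \<Rightarrow> ereal (log 2 (real n)) | \<infinity> \<Rightarrow> \<infinity>)"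

end

theory Submission
  imports Defs
begin

text \<open>Any two points of the unit square are at distance at most sqrt 2, so every matching
  costs at most sqrt 2. For the doubling bound let T lie within r of S. Under an optimal
  matching each point of T lies within k r of its partner in S. Rounding each displacement to
  a grid of mesh r/2 and moving the partner by the rounded displacement, then projecting back
  onto the square (a 1-Lipschitz retraction), lands within r/2 of the point of T. The resulting
  centers are indexed by a k-tuple of points of S and a k-tuple of grid points, so there are at
  most k^k (4k+1)^(2k) <= k^(9k) of them, which gives ddim <= 9 k log2 k.\<close>

abbreviation matching_cost :: "nat \<Rightarrow> 'a::metric_space list \<Rightarrow> 'a list \<Rightarrow> real" where
  "matching_cost k xs ys \<equiv> (1 / real k) * (\<Sum>i<k. dist (xs ! i) (ys ! i))"

lemma finite_matching_costs:
  "finite {matching_cost k xs ys | xs ys. mset xs = S \<and> mset ys = T}"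
proof -
  obtain xs0 ys0 where "mset xs0 = S" "mset ys0 = T" by (metis ex_mset)
  then have "finite ({xs. mset xs = S} \<times> {ys. mset ys = T})"
    using mset_eq_finite by blast
  then have "finite ((\<lambda>(xs, ys). matching_cost k xs ys) ` ({xs. mset xs = S} \<times> {ys. mset ys = T}))"
    by blast
  then show ?thesis by (rule finite_subset[rotated]) auto
qed

lemma EMD_le_matching_cost:
  "mset xs = S \<Longrightarrow> mset ys = T \<Longrightarrow> EMD k S T \<le> matching_cost k xs ys"
  unfolding EMD_def by (rule Min_le[OF finite_matching_costs]) blast

lemma EMD_attained:
  obtains xs ys where "mset xs = S" "mset ys = T" "EMD k S T = matching_cost k xs ys"
proof -
  obtain xs0 ys0 where "mset xs0 = S" "mset ys0 = T" by (metis ex_mset)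
  then have "{matching_cost k xs ys | xs ys. mset xs = S \<and> mset ys = T} \<noteq> {}" by blast
  from Min_in[OF finite_matching_costs this] show ?thesis
    using that unfolding EMD_def by blast
qed

lemma EMD_le_pointwise:
  assumes "mset xs = S" "mset ys = T" "k > 0" "\<And>i. i < k \<Longrightarrow> dist (xs ! i) (ys ! i) \<le> e"
  shows "EMD k S T \<le> e"
proof -
  have "EMD k S T \<le> matching_cost k xs ys" using assms(1,2) by (rule EMD_le_matching_cost)
  also have "\<dots> \<le> (1 / real k) * (\<Sum>i<k. e)" by (intro mult_left_mono sum_mono assms(4)) auto
  also have "\<dots> = e" using \<open>k > 0\<close> by simp
  finally show ?thesis .
qed

lemma dist_le_EMD_optimal:
  assumes "EMD k S T = matching_cost k xs ys" "i < k"
  shows "dist (xs ! i) (ys ! i) \<le> real k * EMD k S T"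
proof -
  have "dist (xs ! i) (ys ! i) \<le> (\<Sum>i<k. dist (xs ! i) (ys ! i))"
    by (rule member_le_sum) (use assms(2) in auto)
  also have "\<dots> = real k * EMD k S T" using assms by simp
  finally show ?thesis .
qed

lemma Xk_nth_in_unit_square:
  "S \<in> Xk k \<Longrightarrow> mset xs = S \<Longrightarrow> i < k \<Longrightarrow> xs ! i \<in> unit_square"
  unfolding Xk_def by (auto dest: nth_mem)

lemma dist_unit_square_le: "x \<in> unit_square \<Longrightarrow> y \<in> unit_square \<Longrightarrow> dist x y \<le> sqrt 2"
proof -
  assume "x \<in> unit_square" "y \<in> unit_square"
  then have "(dist (fst x) (fst y))\<^sup>2 \<le> 1" "(dist (snd x) (snd y))\<^sup>2 \<le> 1"
    unfolding unit_square_def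
    by (auto simp: dist_real_def abs_le_square_iff[of _ 1, simplified, symmetric] abs_le_iff)
  then show ?thesis
    by (metis dist_Pair_Pair add_mono one_add_one prod.collapse real_sqrt_le_mono)
qed

lemma EMD_Xk_le_sqrt2:
  assumes "k > 0" "S \<in> Xk k" "T \<in> Xk k"
  shows "EMD k S T \<le> sqrt 2"
proof -
  obtain xs ys where xs: "mset xs = S" and ys: "mset ys = T" by (metis ex_mset)
  show ?thesis
    using xs ys \<open>k > 0\<close>
  proof (rule EMD_le_pointwise)
    fix i assume "i < k"
    with assms xs ys show "dist (xs ! i) (ys ! i) \<le> sqrt 2"
      by (intro dist_unit_square_le Xk_nth_in_unit_square)
  qed
qed

lemma metric_diam_Xk_le: "k > 0 \<Longrightarrow> metric_diam (EMD k) (Xk k) \<le> ereal (sqrt 2)"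
  unfolding metric_diam_def by (auto intro!: SUP_least EMD_Xk_le_sqrt2)

lemma convex_unit_square: "convex unit_square"
  unfolding unit_square_def by (intro convex_Times) auto

lemma closed_unit_square: "closed unit_square"
  unfolding unit_square_def by (intro closed_Times) auto

lemma unit_square_nonempty: "unit_square \<noteq> {}"
  unfolding unit_square_def by auto

lemma closest_point_in_unit_square [simp]: "closest_point unit_square p \<in> unit_square"
  by (rule closest_point_in_set[OF closed_unit_square unit_square_nonempty])

lemma dist_closest_point_unit_square_le:
  assumes "y \<in> unit_square"
  shows "dist (closest_point unit_square p) y \<le> dist p y"
proof -
  have "dist (closest_point unit_square p) (closest_point unit_square y) \<le> dist p y"
    by (rule closest_point_lipschitz[OF convex_unit_square closed_unit_square unit_square_nonempty])
  then show ?thesis using closest_point_self[OF assms] by simp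
qed

definition grid :: "real \<Rightarrow> int \<Rightarrow> (real \<times> real) set" where
  "grid \<delta> R = (\<lambda>(a, b). (\<delta> * of_int a, \<delta> * of_int b)) ` ({-R..R} \<times> {-R..R})"

lemma finite_grid: "finite (grid \<delta> R)"
  unfolding grid_def by simp

lemma card_grid_le: "card (grid \<delta> R) \<le> nat (2 * R + 1) ^ 2"
proof -
  have "card (grid \<delta> R) \<le> card ({-R..R} \<times> {-R..R})"
    unfolding grid_def by (rule card_image_le) simp
  also have "\<dots> = nat (2 * R + 1) ^ 2" by (simp add: card_cartesian_product power2_eq_square)
  finally show ?thesis .
qed

lemma round_multiple_approx:
  fixes \<delta> t :: real
  assumes "\<delta> > 0" "\<bar>t\<bar> \<le> \<delta> * of_int R"
  obtains a :: int where "\<bar>a\<bar> \<le> R" "\<bar>\<delta> * of_int a - t\<bar> \<le> \<delta> / 2"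
proof
  let ?a = "round (t / \<delta>)"
  have "\<bar>of_int ?a - t / \<delta>\<bar> \<le> 1 / 2" by (rule of_int_round_abs_le)
  then have "\<delta> * \<bar>of_int ?a - t / \<delta>\<bar> \<le> \<delta> * (1 / 2)" using assms(1) by simp
  moreover have "\<delta> * (of_int ?a - t / \<delta>) = \<delta> * of_int ?a - t"
    using assms(1) by (simp add: right_diff_distrib)
  then have "\<delta> * \<bar>of_int ?a - t / \<delta>\<bar> = \<bar>\<delta> * of_int ?a - t\<bar>"
    using assms(1) by (metis abs_mult abs_of_pos)
  ultimately show err: "\<bar>\<delta> * of_int ?a - t\<bar> \<le> \<delta> / 2" by simp
  \<comment> \<open>an integer of absolute value at most R + 1/2 is at most R\<close>
  have "\<delta> * \<bar>of_int ?a\<bar> = \<bar>(\<delta> * of_int ?a - t) + t\<bar>"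
    using assms(1) by (simp add: abs_mult)
  also have "\<dots> \<le> \<delta> * (of_int R + 1 / 2)"
    using err assms(2) abs_triangle_ineq[of "\<delta> * of_int ?a - t" t] by (simp add: distrib_left)
  finally have "\<delta> * \<bar>of_int ?a\<bar> \<le> \<delta> * (of_int R + 1 / 2)" .
  then have "of_int \<bar>?a\<bar> < (of_int (R + 1) :: real)" using assms(1) by simp
  then show "\<bar>?a\<bar> \<le> R" by linarith
qed

lemma grid_approx:
  assumes "\<delta> > 0" "norm v \<le> \<delta> * of_int R"
  obtains q where "q \<in> grid \<delta> R" "dist q v \<le> \<delta>"
proof -
  have "\<bar>fst v\<bar> \<le> \<delta> * of_int R" "\<bar>snd v\<bar> \<le> \<delta> * of_int R"
    using assms(2) norm_fst_le[of "fst v" "snd v"] norm_snd_le[of "snd v" "fst v"] by simp_all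
  then obtain a b :: int where ab: "\<bar>a\<bar> \<le> R" "\<bar>b\<bar> \<le> R"
    and err: "\<bar>\<delta> * of_int a - fst v\<bar> \<le> \<delta> / 2" "\<bar>\<delta> * of_int b - snd v\<bar> \<le> \<delta> / 2"
    using round_multiple_approx[OF assms(1)] by metis
  let ?q = "(\<delta> * of_int a, \<delta> * of_int b)"
  have "?q \<in> grid \<delta> R" unfolding grid_def using ab by (auto simp: abs_le_iff)
  moreover have "dist ?q v \<le> \<delta>"
  proof -
    have "(\<delta> * of_int a - fst v)\<^sup>2 \<le> (\<delta> / 2)\<^sup>2" "(\<delta> * of_int b - snd v)\<^sup>2 \<le> (\<delta> / 2)\<^sup>2"
      using err by (simp_all add: abs_le_square_iff[symmetric] abs_of_pos assms(1))
    moreover have "(\<delta> / 2)\<^sup>2 + (\<delta> / 2)\<^sup>2 \<le> \<delta>\<^sup>2" by (simp add: power_divide)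
    ultimately have "(dist (fst ?q) (fst v))\<^sup>2 + (dist (snd ?q) (snd v))\<^sup>2 \<le> \<delta>\<^sup>2"
      unfolding dist_real_def by simp
    then show ?thesis
      using assms(1) by (metis dist_Pair_Pair prod.collapse real_sqrt_le_mono real_sqrt_abs abs_of_pos)
  qed
  ultimately show ?thesis using that by blast
qed

definition candidate_centers :: "nat \<Rightarrow> real \<Rightarrow> (real \<times> real) multiset \<Rightarrow> (real \<times> real) multiset set" where
  "candidate_centers k \<delta> S =
     (\<lambda>(xs, qs). mset (map2 (\<lambda>x q. closest_point unit_square (x + q)) xs qs))
       ` ({xs. set xs \<subseteq> set_mset S \<and> length xs = k} \<times> {qs. set qs \<subseteq> grid \<delta> (2 * int k) \<and> length qs = k})"

lemma candidate_centers_subset_Xk: "candidate_centers k \<delta> S \<subseteq> Xk k"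
  unfolding candidate_centers_def Xk_def by auto

lemma finite_candidate_centers: "finite (candidate_centers k \<delta> S)"
  unfolding candidate_centers_def
  by (intro finite_imageI finite_cartesian_product finite_lists_length_eq finite_grid) simp

lemma card_candidate_centers_le:
  assumes "S \<in> Xk k"
  shows "card (candidate_centers k \<delta> S) \<le> k ^ k * (4 * k + 1) ^ (2 * k)"
proof -
  let ?L = "{xs. set xs \<subseteq> set_mset S \<and> length xs = k}"
  let ?Q = "{qs. set qs \<subseteq> grid \<delta> (2 * int k) \<and> length qs = k}"
  have "card (candidate_centers k \<delta> S) \<le> card (?L \<times> ?Q)"
    unfolding candidate_centers_def
    by (intro card_image_le finite_cartesian_product finite_lists_length_eq finite_grid) simp
  also have "\<dots> = card (set_mset S) ^ k * card (grid \<delta> (2 * int k)) ^ k"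
    by (simp add: card_cartesian_product card_lists_length_eq finite_grid)
  also have "\<dots> \<le> k ^ k * ((4 * k + 1) ^ 2) ^ k"
  proof (intro mult_mono power_mono)
    obtain xs where "mset xs = S" by (metis ex_mset)
    then show "card (set_mset S) \<le> k" using assms card_length[of xs] by (auto simp: Xk_def)
    have "nat (2 * (2 * int k) + 1) = 4 * k + 1" by simp
    then show "card (grid \<delta> (2 * int k)) \<le> (4 * k + 1)\<^sup>2" using card_grid_le by metis
  qed simp_all
  finally show ?thesis by (simp add: power_mult)
qed

lemma candidate_center_near:
  assumes k: "k > 0" and S: "S \<in> Xk k" and T: "T \<in> Xk k"
    and \<delta>: "\<delta> > 0" and ST: "EMD k S T \<le> 2 * \<delta>"
  obtains c where "c \<in> candidate_centers k \<delta> S" "EMD k c T \<le> \<delta>"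
proof -
  obtain xs ys where xs: "mset xs = S" and ys: "mset ys = T"
    and opt: "EMD k S T = matching_cost k xs ys"
    by (rule EMD_attained)
  have len: "length xs = k" "length ys = k" using S T xs ys by (auto simp: Xk_def)
  have "\<exists>q \<in> grid \<delta> (2 * int k). dist q (ys ! i - xs ! i) \<le> \<delta>" if "i < k" for i
  proof -
    have "norm (ys ! i - xs ! i) \<le> real k * EMD k S T"
      using dist_le_EMD_optimal[OF opt that] by (simp add: dist_norm norm_minus_commute)
    also have "\<dots> \<le> \<delta> * of_int (2 * int k)"
      using mult_left_mono[OF ST, of "real k"] by (simp add: algebra_simps)
    finally show ?thesis using grid_approx[OF \<delta>] by metis
  qed
  then obtain q where q: "\<And>i. i < k \<Longrightarrow> q i \<in> grid \<delta> (2 * int k)"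
    and q_close: "\<And>i. i < k \<Longrightarrow> dist (q i) (ys ! i - xs ! i) \<le> \<delta>"
    by metis
  define qs where "qs = map q [0..<k]"
  define zs where "zs = map2 (\<lambda>x q. closest_point unit_square (x + q)) xs qs"
  have "mset zs \<in> candidate_centers k \<delta> S"
    unfolding candidate_centers_def zs_def using xs len q
    by (intro image_eqI[where x = "(xs, qs)"]) (auto simp: qs_def)
  moreover have "EMD k (mset zs) T \<le> \<delta>"
    using refl ys k
  proof (rule EMD_le_pointwise)
    fix i assume i: "i < k"
    have "dist (zs ! i) (ys ! i) \<le> dist (xs ! i + q i) (ys ! i)"
      unfolding zs_def qs_def using i len
      by (simp add: dist_closest_point_unit_square_le Xk_nth_in_unit_square[OF T ys i])
    also have "\<dots> = dist (q i) (ys ! i - xs ! i)" by (simp add: dist_norm algebra_simps)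
    finally show "dist (zs ! i) (ys ! i) \<le> \<delta>" using q_close[OF i] by simp
  qed
  ultimately show ?thesis using that by blast
qed

lemma doubling_const_le:
  assumes "\<And>x r. x \<in> X \<Longrightarrow> r > 0 \<Longrightarrow>
    \<exists>C. C \<subseteq> X \<and> finite C \<and> card C \<le> n \<and> mball d X x r \<subseteq> (\<Union>c\<in>C. mball d X c (r / 2))"
  shows "doubling_const d X \<le> enat n"
  unfolding doubling_const_def using assms by (intro Inf_lower) blast

lemma doubling_dim_le:
  assumes "doubling_const d X \<le> enat n" "n > 0"
  shows "doubling_dim d X \<le> ereal (log 2 n)"
proof -
  obtain m where m: "doubling_const d X = enat m" "m \<le> n"
    using assms(1) by (cases "doubling_const d X") auto
  have "log 2 m \<le> log 2 n"
  proof (cases "m = 0")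
    case True
    then show ?thesis using assms(2) by (simp add: log_def)
  next
    case False
    then show ?thesis using m(2) by simp
  qed
  then show ?thesis unfolding doubling_dim_def m(1) by simp
qed

lemma doubling_const_Xk_le:
  assumes "k > 0"
  shows "doubling_const (EMD k) (Xk k) \<le> enat (k ^ k * (4 * k + 1) ^ (2 * k))"
proof (rule doubling_const_le)
  fix S r assume S: "S \<in> Xk k" and r: "(r :: real) > 0"
  have "mball (EMD k) (Xk k) S r \<subseteq> (\<Union>c\<in>candidate_centers k (r / 2) S. mball (EMD k) (Xk k) c (r / 2))"
  proof
    fix T assume "T \<in> mball (EMD k) (Xk k) S r"
    then have T: "T \<in> Xk k" and "EMD k S T \<le> 2 * (r / 2)" by (auto simp: mball_def)
    with assms S r obtain c where "c \<in> candidate_centers k (r / 2) S" "EMD k c T \<le> r / 2"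
      by (elim candidate_center_near[of k S T "r / 2"]) simp_all
    with T show "T \<in> (\<Union>c\<in>candidate_centers k (r / 2) S. mball (EMD k) (Xk k) c (r / 2))"
      by (auto simp: mball_def)
  qed
  then show "\<exists>C. C \<subseteq> Xk k \<and> finite C \<and> card C \<le> k ^ k * (4 * k + 1) ^ (2 * k) \<and>
      mball (EMD k) (Xk k) S r \<subseteq> (\<Union>c\<in>C. mball (EMD k) (Xk k) c (r / 2))"
    using candidate_centers_subset_Xk finite_candidate_centers card_candidate_centers_le[OF S]
    by (intro exI[of _ "candidate_centers k (r / 2) S"]) simp
qed

lemma cover_count_le_power:
  fixes k :: nat
  assumes k: "k \<ge> 2"
  shows "k ^ k * (4 * k + 1) ^ (2 * k) \<le> k ^ (9 * k)"
proof -
  have "4 * k + 1 \<le> k ^ 4"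
  proof -
    have "2 ^ 3 * k \<le> k ^ 3 * k" using power_mono[OF k, of 3] by simp
    then show ?thesis using k by (simp add: power_Suc2[of k 3, symmetric])
  qed
  then have "k ^ k * (4 * k + 1) ^ (2 * k) \<le> k ^ k * (k ^ 4) ^ (2 * k)"
    by (simp add: power_mono)
  also have "\<dots> = k ^ (9 * k)" by (simp flip: power_mult power_add)
  finally show ?thesis .
qed

theorem mainTheorem8:
  shows "(\<forall>k\<ge>2. metric_diam (EMD k) (Xk k) \<le> ereal (sqrt 2)) \<and>
         (\<exists>C::real. \<forall>k::nat\<ge>2. doubling_dim (EMD k) (Xk k) \<le> ereal (C * real k * ln (real k)))"
proof (intro conjI allI impI exI)
  fix k :: nat assume "k \<ge> 2"
  then show "metric_diam (EMD k) (Xk k) \<le> ereal (sqrt 2)" by (intro metric_diam_Xk_le) simp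
next
  fix k :: nat assume k: "k \<ge> 2"
  have "doubling_const (EMD k) (Xk k) \<le> enat (k ^ k * (4 * k + 1) ^ (2 * k))"
    using k by (intro doubling_const_Xk_le) simp
  also have "\<dots> \<le> enat (k ^ (9 * k))" using cover_count_le_power[OF k] by simp
  finally have "doubling_const (EMD k) (Xk k) \<le> enat (k ^ (9 * k))" .
  then have "doubling_dim (EMD k) (Xk k) \<le> ereal (log 2 (real (k ^ (9 * k))))"
    using k by (intro doubling_dim_le) simp_all
  also have "log 2 (real (k ^ (9 * k))) = 9 / ln 2 * real k * ln (real k)"
    by (simp add: log_def ln_realpow)
  finally show "doubling_dim (EMD k) (Xk k) \<le> ereal (9 / ln 2 * real k * ln (real k))" .
qed

end
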